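(* Let $(X,\mathcal{R})$ be an imprimitive symmetric association scheme with $6$ classes, cometric with respect to the ordering $E_0,\dots,E_6$, with first multiplicity $m>2$ and Krein array $\{m,m-1,1,b_3^*,b_4^*,1;\ 1,c_2^*,m-b_3^*,1,c_5^*,m\}$, where $a_2^*=a_4^*+a_5^*$. Define polynomials $v_i^*$ by $v_0^*(x)=1$, $v_1^*(x)=x$ and $xv_i^*(x)=c_{i+1}^*v_{i+1}^*(x)+a_i^*v_i^*(x)+b_{i-1}^*v_{i-1}^*(x)$ for $1\le i\le 6$, where one sets $c_7^*=1$. Then $$mc_2^*c_3^*c_5^*v_7^*(x)=\bigl(x^3-a_2^*x^2-(m+c_2^*(m-1))x+ma_2^*-a_5^*c_3^*\bigr)(x^2+c_2^*x-m)(x-m)(x+1).$$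
   Context: A symmetric association scheme with $d$ classes is a pair $(X,\mathcal{R})$, $X$ finite, $\mathcal{R}=\{R_0,\dots,R_d\}$ symmetric relations with adjacency matrices $A_i$ such that $A_0=I$, $\sum_iA_i=J$, and each $A_iA_j$ is a linear combination of the $A_h$. Its primitive idempotents are $E_0=\frac1{|X|}J,E_1,\dots,E_d$, Krein parameters $q_{ij}^h$ are defined by $E_i\circ E_j=\frac{1}{|X|}\sum_hq_{ij}^hE_h$ ($\circ$ entrywise product), $m_i=\mathrm{rank}(E_i)$. Imprimitive means some $(X,R_i)$, $1\le i\le d$, is disconnected. Cometric with respect to $E_0,\dots,E_d$ means $q_{ij}^h=0$ if $i+j<h$ and $q_{ij}^h\ne0$ if $i+j=h$. Then $m=m_1$, $a_i^*=q_{1i}^i$, $b_i^*=q_{1,i+1}^i$, $c_i^*=q_{1,i-1}^i$, with $a_i^*+b_i^*+c_i^*=m$, and the Krein array is $\{b_0^*,\dots,b_{d-1}^*;c_1^*,\dots,c_d^*\}$. In the given situation, $c_3^*=m-b_3^*$ and $a_1^*=a_3^*=a_6^*=0$. *)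

theory Defs
  imports Complex_Main "HOL-Computational_Algebra.Polynomial"
begin

text \<open>Square matrices over the finite point set X are represented as functions
  'a => 'a => real; only their entries at points of X matter.\<close>

definition mmult :: "'a set \<Rightarrow> ('a \<Rightarrow> 'a \<Rightarrow> real) \<Rightarrow> ('a \<Rightarrow> 'a \<Rightarrow> real) \<Rightarrow> 'a \<Rightarrow> 'a \<Rightarrow> real" where
  "mmult X M N = (\<lambda>x y. \<Sum>z\<in>X. M x z * N z y)"

definition adj :: "('a \<Rightarrow> 'a \<Rightarrow> nat) \<Rightarrow> nat \<Rightarrow> 'a \<Rightarrow> 'a \<Rightarrow> real" where
  "adj R i = (\<lambda>x y. if R x y = i then 1 else 0)"

definition mrank :: "'a set \<Rightarrow> ('a \<Rightarrow> 'a \<Rightarrow> real) \<Rightarrow> nat" where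
  "mrank X M = Max {card S | S. S \<subseteq> X \<and>
     (\<forall>c :: 'a \<Rightarrow> real. (\<forall>x\<in>X. (\<Sum>y\<in>S. c y * M x y) = 0) \<longrightarrow> (\<forall>y\<in>S. c y = 0))}"

text \<open>Symmetric association scheme with d classes: the relation R_i is
  {(x,y) in X x X. R x y = i}, for i = 0..d.\<close>
definition sym_assoc_scheme :: "'a set \<Rightarrow> nat \<Rightarrow> ('a \<Rightarrow> 'a \<Rightarrow> nat) \<Rightarrow> bool" where
  "sym_assoc_scheme X d R \<longleftrightarrow>
     finite X \<and> X \<noteq> {} \<and>
     (\<forall>x\<in>X. \<forall>y\<in>X. R x y \<le> d) \<and>
     (\<forall>i\<le>d. \<exists>x\<in>X. \<exists>y\<in>X. R x y = i) \<and>
     (\<forall>x\<in>X. \<forall>y\<in>X. R x y = 0 \<longleftrightarrow> x = y) \<and>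
     (\<forall>x\<in>X. \<forall>y\<in>X. R x y = R y x) \<and>
     (\<forall>i\<le>d. \<forall>j\<le>d. \<exists>p :: nat \<Rightarrow> real. \<forall>x\<in>X. \<forall>y\<in>X.
        mmult X (adj R i) (adj R j) x y = (\<Sum>h\<le>d. p h * adj R h x y))"

definition primitive_idempotents ::
  "'a set \<Rightarrow> nat \<Rightarrow> ('a \<Rightarrow> 'a \<Rightarrow> nat) \<Rightarrow> (nat \<Rightarrow> 'a \<Rightarrow> 'a \<Rightarrow> real) \<Rightarrow> bool" where
  "primitive_idempotents X d R E \<longleftrightarrow>
     (\<forall>x\<in>X. \<forall>y\<in>X. E 0 x y = 1 / real (card X)) \<and>
     (\<forall>i\<le>d. \<exists>c :: nat \<Rightarrow> real. \<forall>x\<in>X. \<forall>y\<in>X. E i x y = (\<Sum>h\<le>d. c h * adj R h x y)) \<and>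
     (\<forall>i\<le>d. \<exists>x\<in>X. \<exists>y\<in>X. E i x y \<noteq> 0) \<and>
     (\<forall>i\<le>d. \<forall>j\<le>d. \<forall>x\<in>X. \<forall>y\<in>X.
        mmult X (E i) (E j) x y = (if i = j then E i x y else 0)) \<and>
     (\<forall>x\<in>X. \<forall>y\<in>X. (\<Sum>i\<le>d. E i x y) = (if x = y then 1 else 0))"

definition krein_params ::
  "'a set \<Rightarrow> nat \<Rightarrow> (nat \<Rightarrow> 'a \<Rightarrow> 'a \<Rightarrow> real) \<Rightarrow> (nat \<Rightarrow> nat \<Rightarrow> nat \<Rightarrow> real) \<Rightarrow> bool" where
  "krein_params X d E q \<longleftrightarrow>
     (\<forall>i\<le>d. \<forall>j\<le>d. \<forall>x\<in>X. \<forall>y\<in>X.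
        E i x y * E j x y = (1 / real (card X)) * (\<Sum>h\<le>d. q i j h * E h x y))"

definition cometric :: "nat \<Rightarrow> (nat \<Rightarrow> nat \<Rightarrow> nat \<Rightarrow> real) \<Rightarrow> bool" where
  "cometric d q \<longleftrightarrow> (\<forall>i\<le>d. \<forall>j\<le>d. \<forall>h\<le>d.
     (i + j < h \<longrightarrow> q i j h = 0) \<and> (i + j = h \<longrightarrow> q i j h \<noteq> 0))"

definition imprimitive :: "'a set \<Rightarrow> nat \<Rightarrow> ('a \<Rightarrow> 'a \<Rightarrow> nat) \<Rightarrow> bool" where
  "imprimitive X d R \<longleftrightarrow> (\<exists>i\<in>{1..d}. \<not> (\<forall>x\<in>X. \<forall>y\<in>X.
     (x, y) \<in> {(u, v). u \<in> X \<and> v \<in> X \<and> R u v = i}\<^sup>*))"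

definition astar :: "(nat \<Rightarrow> nat \<Rightarrow> nat \<Rightarrow> real) \<Rightarrow> nat \<Rightarrow> real" where
  "astar q i = q 1 i i"
definition bstar :: "(nat \<Rightarrow> nat \<Rightarrow> nat \<Rightarrow> real) \<Rightarrow> nat \<Rightarrow> real" where
  "bstar q i = q 1 (i + 1) i"
definition cstar :: "(nat \<Rightarrow> nat \<Rightarrow> nat \<Rightarrow> real) \<Rightarrow> nat \<Rightarrow> real" where
  "cstar q i = q 1 (i - 1) i"

fun vstar :: "(nat \<Rightarrow> real) \<Rightarrow> (nat \<Rightarrow> real) \<Rightarrow> (nat \<Rightarrow> real) \<Rightarrow> nat \<Rightarrow> real poly" where
  "vstar a b c 0 = 1"
| "vstar a b c (Suc 0) = [:0, 1:]"
| "vstar a b c (Suc (Suc i)) =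
     smult (1 / c (Suc (Suc i)))
       ([:0, 1:] * vstar a b c (Suc i) - smult (a (Suc i)) (vstar a b c (Suc i))
        - smult (b i) (vstar a b c i))"

end

theory Submission
  imports Defs
begin

text \<open>Writing \<open>\<langle>M, N\<rangle> = \<Sum>\<^sub>x\<^sub>y M x y N x y\<close>, orthogonality of the idempotents
  together with the Krein condition gives \<open>\<langle>E\<^sub>i \<circ> E\<^sub>j, E\<^sub>h\<rangle> = q\<^sub>i\<^sub>j\<^sup>h tr E\<^sub>h / |X|\<close>; as the
  left side is symmetric in \<open>j, h\<close>, \<open>q\<^sub>i\<^sub>j\<^sup>h tr E\<^sub>h = q\<^sub>i\<^sub>h\<^sup>j tr E\<^sub>j\<close>, and since
  \<open>\<Sum>\<^sub>j E\<^sub>j = I\<close> the column sums \<open>\<Sum>\<^sub>j q\<^sub>i\<^sub>j\<^sup>h\<close> all equal \<open>tr E\<^sub>i\<close>. For a cometric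
  scheme the first relation makes \<open>q\<^sub>1\<^sub>j\<^sup>h\<close> tridiagonal, so \<open>c\<^sub>h\<^sup>* + a\<^sub>h\<^sup>* + b\<^sub>h\<^sup>* = tr E\<^sub>1\<close>,
  and \<open>tr E\<^sub>1 = b\<^sub>0\<^sup>*/c\<^sub>1\<^sup>* = m\<close>. This determines every \<open>a\<^sub>h\<^sup>*\<close> and \<open>b\<^sub>4\<^sup>*\<close> from the given
  Krein array, after which \<open>v\<^sub>7\<^sup>*\<close> is computed from the three-term recurrence.\<close>

definition mtrace :: "'a set \<Rightarrow> ('a \<Rightarrow> 'a \<Rightarrow> real) \<Rightarrow> real" where
  "mtrace X M = (\<Sum>x\<in>X. M x x)"

context
  fixes X :: "'a set" and d :: nat and R :: "'a \<Rightarrow> 'a \<Rightarrow> nat" and E :: "nat \<Rightarrow> 'a \<Rightarrow> 'a \<Rightarrow> real"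
  assumes scheme: "sym_assoc_scheme X d R"
    and idem: "primitive_idempotents X d R E"
begin

lemma idempotent_in_span_adj:
  assumes "i \<le> d"
  obtains c where "\<And>x y. x \<in> X \<Longrightarrow> y \<in> X \<Longrightarrow> E i x y = (\<Sum>h\<le>d. c h * adj R h x y)"
  using idem assms unfolding primitive_idempotents_def by metis

lemma idempotent_sym:
  assumes "i \<le> d" "x \<in> X" "y \<in> X"
  shows "E i y x = E i x y"
proof -
  have "R x y = R y x" using scheme assms unfolding sym_assoc_scheme_def by blast
  then show ?thesis
    using assms by (elim idempotent_in_span_adj) (simp add: adj_def)
qed

lemma idempotent_diag_const:
  assumes "i \<le> d" "x \<in> X" "y \<in> X"
  shows "E i x x = E i y y"
proof -
  have "R x x = 0" "R y y = 0" using scheme assms unfolding sym_assoc_scheme_def by blast+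
  then show ?thesis
    using assms by (elim idempotent_in_span_adj) (simp add: adj_def)
qed

lemma mtrace_idempotent_zero: "mtrace X (E 0) = 1"
  using scheme idem unfolding sym_assoc_scheme_def primitive_idempotents_def mtrace_def by simp

lemma sum_idempotent_products:
  assumes "i \<le> d" "j \<le> d"
  shows "(\<Sum>x\<in>X. \<Sum>y\<in>X. E i x y * E j x y) = (if i = j then mtrace X (E i) else 0)"
proof -
  have "(\<Sum>x\<in>X. \<Sum>y\<in>X. E i x y * E j x y) = (\<Sum>x\<in>X. mmult X (E i) (E j) x x)"
    unfolding mmult_def by (intro sum.cong refl) (simp add: idempotent_sym[OF assms(2)])
  also have "\<dots> = (\<Sum>x\<in>X. if i = j then E i x x else 0)"
    using idem assms unfolding primitive_idempotents_def by (intro sum.cong refl) blast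
  finally show ?thesis by (simp add: mtrace_def)
qed

lemma mtrace_idempotent_pos:
  assumes "i \<le> d"
  shows "mtrace X (E i) > 0"
proof -
  have fin: "finite X" using scheme unfolding sym_assoc_scheme_def by blast
  from idem assms obtain x0 y0 where xy: "x0 \<in> X" "y0 \<in> X" "E i x0 y0 \<noteq> 0"
    unfolding primitive_idempotents_def by blast
  have "0 < (\<Sum>y\<in>X. E i x0 y * E i x0 y)"
    by (rule sum_pos2[OF fin xy(2)]) (use xy in \<open>auto simp: zero_less_mult_iff\<close>)
  then have "0 < (\<Sum>x\<in>X. \<Sum>y\<in>X. E i x y * E i x y)"
    by (rule sum_pos2[OF fin xy(1)]) (auto intro: sum_nonneg)
  then show ?thesis using sum_idempotent_products[OF assms assms] by simp
qed

context
  fixes q :: "nat \<Rightarrow> nat \<Rightarrow> nat \<Rightarrow> real"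
  assumes krein: "krein_params X d E q"
begin

lemma krein_triple_sum:
  assumes i: "i \<le> d" and j: "j \<le> d" and h: "h \<le> d"
  shows "(\<Sum>x\<in>X. \<Sum>y\<in>X. E i x y * E j x y * E h x y) = q i j h * mtrace X (E h) / real (card X)"
proof -
  have "(\<Sum>x\<in>X. \<Sum>y\<in>X. E i x y * E j x y * E h x y)
      = (\<Sum>x\<in>X. \<Sum>y\<in>X. \<Sum>k\<le>d. q i j k / real (card X) * (E k x y * E h x y))"
  proof (intro sum.cong refl)
    fix x y assume "x \<in> X" "y \<in> X"
    then have "E i x y * E j x y = 1 / real (card X) * (\<Sum>k\<le>d. q i j k * E k x y)"
      using krein i j unfolding krein_params_def by blast
    then show "E i x y * E j x y * E h x y = (\<Sum>k\<le>d. q i j k / real (card X) * (E k x y * E h x y))"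
      by (simp add: sum_distrib_left sum_distrib_right mult_ac)
  qed
  also have "\<dots> = (\<Sum>k\<le>d. q i j k / real (card X) * (\<Sum>x\<in>X. \<Sum>y\<in>X. E k x y * E h x y))"
    by (simp add: sum_distrib_left sum.swap[where A = X and B = "{..d}"])
  also have "\<dots> = q i j h * mtrace X (E h) / real (card X)"
    using h by (simp add: sum_idempotent_products[OF _ h] if_distrib cong: if_cong)
  finally show ?thesis .
qed

lemma krein_mtrace_swap:
  assumes "i \<le> d" "j \<le> d" "h \<le> d"
  shows "q i j h * mtrace X (E h) = q i h j * mtrace X (E j)"
proof -
  have "real (card X) \<noteq> 0" using scheme unfolding sym_assoc_scheme_def by auto
  moreover have "(\<Sum>x\<in>X. \<Sum>y\<in>X. E i x y * E j x y * E h x y)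
      = (\<Sum>x\<in>X. \<Sum>y\<in>X. E i x y * E h x y * E j x y)"
    by (simp add: mult_ac)
  ultimately show ?thesis
    using krein_triple_sum[OF assms] krein_triple_sum[OF assms(1,3,2)] by (simp add: field_simps)
qed

text \<open>Comparing coefficients of \<open>E\<^sub>h\<close> in \<open>\<Sum>\<^sub>j E\<^sub>i \<circ> E\<^sub>j = E\<^sub>i \<circ> I = (tr E\<^sub>i / |X|) \<Sum>\<^sub>k E\<^sub>k\<close>:
  the coefficient is extracted by multiplying with \<open>E\<^sub>h\<close>.\<close>

lemma krein_column_sum:
  assumes i: "i \<le> d" and h: "h \<le> d"
  shows "(\<Sum>j\<le>d. q i j h) = mtrace X (E i)"
proof -
  have fin: "finite X" and ne: "X \<noteq> {}" using scheme unfolding sym_assoc_scheme_def by auto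
  then obtain x0 where x0: "x0 \<in> X" by blast
  define n where "n = real (card X)"
  have n: "n \<noteq> 0" using fin ne unfolding n_def by auto
  define D where "D = E i x0 x0"
  define t where "t k = (\<Sum>j\<le>d. q i j k) / n - D" for k
  have t_comb: "(\<Sum>k\<le>d. t k * E k x y) = 0" if x: "x \<in> X" and y: "y \<in> X" for x y
  proof -
    have "(\<Sum>j\<le>d. E i x y * E j x y) = E i x y * (\<Sum>j\<le>d. E j x y)"
      by (simp add: sum_distrib_left)
    also have "\<dots> = D * (\<Sum>k\<le>d. E k x y)"
      using idem x y idempotent_diag_const[OF i x x0]
      unfolding primitive_idempotents_def D_def by auto
    finally have identity: "(\<Sum>j\<le>d. E i x y * E j x y) = D * (\<Sum>k\<le>d. E k x y)" .
    have "(\<Sum>j\<le>d. E i x y * E j x y) = (\<Sum>j\<le>d. \<Sum>k\<le>d. q i j k / n * E k x y)"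
      using krein i x y unfolding krein_params_def n_def
      by (intro sum.cong refl) (simp add: sum_distrib_left)
    also have "\<dots> = (\<Sum>k\<le>d. (\<Sum>j\<le>d. q i j k) / n * E k x y)"
      by (subst sum.swap) (simp add: sum_distrib_right sum_divide_distrib)
    finally show ?thesis
      using identity unfolding t_def by (simp add: left_diff_distrib sum_subtractf sum_distrib_left)
  qed
  from idem h obtain x y where xy: "x \<in> X" "y \<in> X" "E h x y \<noteq> 0"
    unfolding primitive_idempotents_def by blast
  have "0 = (\<Sum>z\<in>X. (\<Sum>k\<le>d. t k * E k x z) * E h z y)"
    using t_comb xy by simp
  also have "\<dots> = (\<Sum>k\<le>d. t k * mmult X (E k) (E h) x y)"
    unfolding mmult_def
    by (simp add: sum_distrib_left sum_distrib_right sum.swap[where A = X] mult_ac)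
  also have "\<dots> = (\<Sum>k\<le>d. if k = h then t h * E h x y else 0)"
    using idem h xy unfolding primitive_idempotents_def by (intro sum.cong refl) auto
  also have "\<dots> = t h * E h x y" using h by simp
  finally have "t h = 0" using xy by simp
  then show ?thesis
    using n idempotent_diag_const[OF i _ x0] unfolding t_def n_def D_def mtrace_def
    by (simp add: field_simps)
qed

context
  assumes comet: "cometric d q"
begin

lemma cometric_krein_tridiagonal:
  assumes "j \<le> d" "h \<le> d" "h + 1 < j \<or> j + 1 < h"
  shows "q 1 j h = 0"
  using assms(3)
proof
  assume "h + 1 < j"
  then have "q 1 h j = 0" using comet assms unfolding cometric_def by auto
  moreover have "q 1 j h * mtrace X (E h) = q 1 h j * mtrace X (E j)"
    using assms by (intro krein_mtrace_swap) auto
  moreover have "mtrace X (E h) > 0" by (rule mtrace_idempotent_pos[OF assms(2)])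
  ultimately show ?thesis by simp
qed (use comet assms in \<open>auto simp: cometric_def\<close>)

lemma cometric_abc_sum:
  assumes "1 \<le> h" "h < d"
  shows "cstar q h + astar q h + bstar q h = mtrace X (E 1)"
proof -
  have "(\<Sum>j\<le>d. q 1 j h) = (\<Sum>j\<in>{h - 1, h, h + 1}. q 1 j h)"
    using assms by (intro sum.mono_neutral_right ballI cometric_krein_tridiagonal) auto
  also have "\<dots> = cstar q h + astar q h + bstar q h"
    using assms by (cases h) (simp_all add: cstar_def astar_def bstar_def)
  finally show ?thesis using krein_column_sum assms by simp
qed

lemma cometric_ca_sum_last:
  assumes "1 \<le> d"
  shows "cstar q d + astar q d = mtrace X (E 1)"
proof -
  have "(\<Sum>j\<le>d. q 1 j d) = (\<Sum>j\<in>{d - 1, d}. q 1 j d)"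
    using assms by (intro sum.mono_neutral_right ballI cometric_krein_tridiagonal) auto
  also have "\<dots> = cstar q d + astar q d"
    using assms by (simp add: cstar_def astar_def)
  finally show ?thesis using krein_column_sum assms by simp
qed

end

lemma mtrace_first_idempotent:
  assumes "1 \<le> d"
  shows "mtrace X (E 1) * cstar q 1 = bstar q 0"
  using krein_mtrace_swap[of 1 0 1] assms mtrace_idempotent_zero
  by (simp add: cstar_def bstar_def mult.commute)

end

end

lemma cometric_cstar_nonzero:
  assumes "cometric d q" "1 \<le> h" "h \<le> d"
  shows "cstar q h \<noteq> 0"
  using assms unfolding cometric_def cstar_def by auto

lemma vstar_seven_factor:
  fixes a b c :: "nat \<Rightarrow> real" and m c2 c3 c5 :: real
  assumes "a 1 = 0" "a 2 = m - 1 - c2" "a 3 = 0" "a 4 = c5 - c2" "a 5 = m - 1 - c5" "a 6 = 0"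
    "b 0 = m" "b 1 = m - 1" "b 2 = 1" "b 3 = m - c3" "b 4 = m - 1 + c2 - c5" "b 5 = 1"
    "c 2 = c2" "c 3 = c3" "c 4 = 1" "c 5 = c5" "c 6 = m" "c 7 = 1"
    "c2 \<noteq> 0" "c3 \<noteq> 0" "c5 \<noteq> 0" "m \<noteq> 0"
  shows "smult (m * c2 * c3 * c5) (vstar a b c 7) =
    [:m * a 2 - a 5 * c3, - (m + c2 * (m - 1)), - a 2, 1:] * [:- m, c2, 1:] * [:- m, 1:] * [:1, 1:]"
  using assms by (simp add: numeral_eq_Suc) (simp_all add: field_simps eval_nat_numeral)

theorem lemma4p1:
  fixes X :: "'a set" and R :: "'a \<Rightarrow> 'a \<Rightarrow> nat"
    and E :: "nat \<Rightarrow> 'a \<Rightarrow> 'a \<Rightarrow> real" and q :: "nat \<Rightarrow> nat \<Rightarrow> nat \<Rightarrow> real"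
    and m c2 b3 b4 c5 :: real
  assumes scheme: "sym_assoc_scheme X 6 R"
    and imprim: "imprimitive X 6 R"
    and idem: "primitive_idempotents X 6 R E"
    and krein: "krein_params X 6 E q"
    and comet: "cometric 6 q"
    and mult: "m = real (mrank X (E 1))"
    and m_gt: "m > 2"
    and b_arr: "bstar q 0 = m" "bstar q 1 = m - 1" "bstar q 2 = 1"
               "bstar q 3 = b3" "bstar q 4 = b4" "bstar q 5 = 1"
    and c_arr: "cstar q 1 = 1" "cstar q 2 = c2" "cstar q 3 = m - b3"
               "cstar q 4 = 1" "cstar q 5 = c5" "cstar q 6 = m"
    and a_rel: "astar q 2 = astar q 4 + astar q 5"
  shows "smult (m * c2 * cstar q 3 * c5) (vstar (astar q) (bstar q) ((cstar q)(7 := 1)) 7) =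
    [:m * astar q 2 - astar q 5 * cstar q 3, - (m + c2 * (m - 1)), - astar q 2, 1:]
    * [:- m, c2, 1:] * [:- m, 1:] * [:1, 1:]"
proof -
  text \<open>Neither imprimitivity nor the rank description of \<open>m\<close> is needed: \<open>tr E\<^sub>1 = b\<^sub>0\<^sup>* = m\<close>.\<close>
  have tr: "mtrace X (E 1) = m"
    using mtrace_first_idempotent[OF scheme idem krein] b_arr(1) c_arr(1) by simp
  have abc: "cstar q h + astar q h + bstar q h = m" if "h \<in> {1..5}" for h
    using cometric_abc_sum[OF scheme idem krein comet, of h] that tr by simp
  have a6: "cstar q 6 + astar q 6 = m"
    using cometric_ca_sum_last[OF scheme idem krein comet] tr by simp
  have nz: "cstar q h \<noteq> 0" if "h \<in> {2, 3, 5}" for h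
    using cometric_cstar_nonzero[OF comet, of h] that by auto
  show ?thesis
    by (rule vstar_seven_factor)
      (use abc[of 1] abc[of 2] abc[of 3] abc[of 4] abc[of 5] a6 nz[of 2] nz[of 3] nz[of 5]
           a_rel b_arr c_arr m_gt in auto)
qed

end
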